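(* Let $x_1,\dots,x_m$ be independent $\sigma$-smooth MWIS instances on $n$ vertices and let $q>0$. With probability at least $1-4q\sigma^{-1}m^2n^8\ln n$ over the vertex weights, no two distinct elements of $\tau(x_1)\cup\dots\cup\tau(x_m)$ are within distance $q$ of each other.
   Context: Fix $\sigma\in(0,1)$. A $\sigma$-smooth MWIS instance has an arbitrary graph on vertex set $[n]$, and each vertex weight $w_v$ is drawn independently from its own distribution supported in $[0,1]$ with density at most $\sigma^{-1}$ pointwise (so almost surely all weights are distinct and nonzero). For an instance $x$ with weights $w$, $\tau(x)=\{\rho(v_1,v_2,k_1,k_2): v_1,v_2,k_1,k_2\in[n],\ v_1\ne v_2,\ k_1,k_2\ge2,\ k_1\ne k_2\}$ where $\rho(v_1,v_2,k_1,k_2)=\frac{\ln(w_{v_1})-\ln(w_{v_2})}{\ln(k_1)-\ln(k_2)}$. *)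

theory Defs
  imports "HOL-Probability.Probability"
begin

definition rho :: "(nat \<Rightarrow> real) \<Rightarrow> nat \<Rightarrow> nat \<Rightarrow> nat \<Rightarrow> nat \<Rightarrow> real" where
  "rho w v1 v2 k1 k2 = (ln (w v1) - ln (w v2)) / (ln (real k1) - ln (real k2))"

definition tau :: "nat \<Rightarrow> (nat \<Rightarrow> real) \<Rightarrow> real set" where
  "tau n w = {rho w v1 v2 k1 k2 | v1 v2 k1 k2.
      v1 \<in> {1..n} \<and> v2 \<in> {1..n} \<and> v1 \<noteq> v2 \<and>
      k1 \<in> {2..n} \<and> k2 \<in> {2..n} \<and> k1 \<noteq> k2}"

end

theory Submission
  imports Defs
begin

text \<open>Every element of \<open>\<tau>(x\<^sub>i)\<close> is a difference \<open>ln w\<^sub>v\<^sub>1 - ln w\<^sub>v\<^sub>2\<close> divided by a nonzero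
  \<open>d = ln k\<^sub>1 - ln k\<^sub>2\<close> with \<open>|d| \<le> ln n\<close>. If two distinct such values \<open>r\<close>, \<open>r'\<close> (with
  denominator \<open>d'\<close> and vertices \<open>v\<^sub>3, v\<^sub>4\<close> of instance \<open>j\<close>) are \<open>q\<close>-close, then
  \<open>ln w\<^sub>v\<^sub>3 - ln w\<^sub>v\<^sub>4\<close> lies within \<open>q ln n\<close> of \<open>d' r\<close>. Unless \<open>v\<^sub>3, v\<^sub>4\<close> are the very
  vertices of \<open>r\<close>, one of them is a weight not occurring in \<open>r\<close>; by independence and the density
  bound \<open>1/\<sigma>\<close> its logarithm lands in a given window of width \<open>2 q ln n\<close> with probability at most
  \<open>2 q ln n / \<sigma>\<close>, since \<open>exp\<close> is 1-Lipschitz on \<open>(-\<infinity>, 0]\<close>. If the vertices coincide, then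
  \<open>r\<close>, \<open>r'\<close> are \<open>a/d\<close>, \<open>a/d'\<close> for one \<open>a\<close>, and \<open>|d - d'| \<ge> 1/n\<^sup>2\<close> forces
  \<open>|a| \<le> q (ln n)\<^sup>2 n\<^sup>2\<close>, again an event of small probability. A union bound over the
  \<open>m\<^sup>2 n\<^sup>8\<close> pairs of indices finishes the proof.\<close>

lemma exp_diff_le_diff_nonpos:
  fixes u v :: real
  assumes "v \<le> u" "u \<le> 0"
  shows "exp u - exp v \<le> u - v"
proof -
  have "exp u - exp v = exp u * (1 - exp (v - u))"
    by (simp add: algebra_simps exp_diff)
  also have "\<dots> \<le> 1 * (u - v)"
  proof (intro mult_mono)
    show "1 - exp (v - u) \<le> u - v"
      using exp_ge_add_one_self[of "v - u"] by linarith
  qed (use assms in auto)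
  finally show ?thesis by simp
qed

lemma nn_integral_density_ln_window_le:
  fixes g :: "real \<Rightarrow> ennreal"
  assumes g_le: "\<forall>x. g x \<le> ennreal c" and g_support: "\<forall>x. x \<notin> {0..1} \<longrightarrow> g x = 0"
    and "0 \<le> L" "0 \<le> c"
  shows "(\<integral>\<^sup>+ y. g y * indicator {y. \<bar>ln y - z\<bar> \<le> L} y \<partial>lborel) \<le> ennreal (2 * L * c)"
proof -
  define a where "a = exp (z - L)"
  define b where "b = exp (min (z + L) 0)"
  have "(\<integral>\<^sup>+ y. g y * indicator {y. \<bar>ln y - z\<bar> \<le> L} y \<partial>lborel)
      \<le> (\<integral>\<^sup>+ y. ennreal c * indicator {a..b} y \<partial>lborel)"
  proof (rule nn_integral_mono_AE)
    show "AE y in lborel. g y * indicator {y. \<bar>ln y - z\<bar> \<le> L} y \<le> ennreal c * indicator {a..b} y"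
      using AE_lborel_singleton[of 0]
    proof eventually_elim
      case (elim y)
      show ?case
      proof (cases "\<bar>ln y - z\<bar> \<le> L \<and> y \<in> {0..1}")
        case True
        with elim have "0 < y" "z - L \<le> ln y" "ln y \<le> min (z + L) 0"
          by auto
        then have "a \<le> y" "y \<le> b"
          unfolding a_def b_def by (metis exp_ln exp_le_cancel_iff)+
        then show ?thesis using g_le by (auto simp: indicator_def)
      next
        case False
        then show ?thesis using g_support by (auto simp: indicator_def)
      qed
    qed
  qed
  also have "\<dots> = ennreal c * emeasure lborel {a..b}"
    by (simp add: nn_integral_cmult)
  also have "\<dots> \<le> ennreal (2 * L * c)"
  proof (cases "a \<le> b")
    case True
    then have "b - a \<le> min (z + L) 0 - (z - L)"
      unfolding a_def b_def by (intro exp_diff_le_diff_nonpos) (auto simp: a_def b_def)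
    then have "c * (b - a) \<le> 2 * L * c"
      using mult_left_mono[of "b - a" "2 * L" c] \<open>0 \<le> c\<close> by (simp add: mult.commute)
    then show ?thesis using True \<open>0 \<le> c\<close> by (simp add: ennreal_mult[symmetric] ennreal_leI)
  qed simp
  finally show ?thesis .
qed

text \<open>By Fubini for the product law of the independent family: once the coordinates other
  than \<open>p\<close> are fixed, the event is a logarithmic window for \<open>X p\<close> alone.\<close>

lemma (in prob_space) measure_ln_window_indep_le:
  fixes X :: "'i \<Rightarrow> 'a \<Rightarrow> real" and F :: "('i \<Rightarrow> real) \<Rightarrow> real"
  assumes fin: "finite I" and p: "p \<in> I"
    and ind: "indep_vars (\<lambda>_. borel) X I"
    and dist: "distributed M lborel (X p) g"
    and g_le: "\<forall>x. g x \<le> ennreal c" and g_support: "\<forall>x. x \<notin> {0..1} \<longrightarrow> g x = 0"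
    and F_meas: "F \<in> borel_measurable (PiM I (\<lambda>_. borel))"
    and F_indep: "\<forall>x y. F (x(p := y)) = F x"
    and "0 \<le> L" "0 \<le> c"
  shows "measure M {\<omega>\<in>space M. \<bar>ln (X p \<omega>) - F (\<lambda>j\<in>I. X j \<omega>)\<bar> \<le> L} \<le> 2 * L * c"
proof -
  have meas: "\<forall>i\<in>I. X i \<in> borel_measurable M"
    using ind by (simp add: indep_vars_def)
  define N where "N = (\<lambda>i. distr M borel (if i \<in> I then X i else (\<lambda>_. 0::real)))"
  have N_prob: "prob_space (N i)" for i
    unfolding N_def using meas by (intro prob_space_distr) auto
  interpret product_sigma_finite N
    unfolding product_sigma_finite_def using N_prob by (simp add: prob_space_imp_sigma_finite)
  define Xv where "Xv = (\<lambda>\<omega>. \<lambda>j\<in>I. X j \<omega>)"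
  have Xv_meas: "Xv \<in> measurable M (PiM I (\<lambda>_. borel))"
    unfolding Xv_def using meas by (intro measurable_restrict) auto
  define G where "G = {x \<in> space (PiM I (\<lambda>_. (borel::real measure))). \<bar>ln (x p) - F x\<bar> \<le> L}"
  have G_sets: "G \<in> sets (PiM I (\<lambda>_. borel))"
    unfolding G_def using F_meas p by measurable
  have event_eq: "{\<omega>\<in>space M. \<bar>ln (X p \<omega>) - F (\<lambda>j\<in>I. X j \<omega>)\<bar> \<le> L} = Xv -` G \<inter> space M"
    using p unfolding G_def Xv_def by (auto simp: space_PiM)
  have "distr M (PiM I (\<lambda>_. borel)) Xv = PiM I (\<lambda>i. distr M borel (X i))"
    unfolding Xv_def using ind p meas by (subst indep_vars_iff_distr_eq_PiM'[symmetric]) auto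
  also have "\<dots> = PiM I N"
    unfolding N_def by (intro PiM_cong) auto
  finally have distr_Xv: "distr M (PiM I (\<lambda>_. borel)) Xv = PiM I N" .
  have sets_N: "sets (PiM I N) = sets (PiM I (\<lambda>_. borel))"
    unfolding N_def by (intro sets_PiM_cong) auto
  have I_eq: "I = insert p (I - {p})"
    using p by auto
  have "emeasure M (Xv -` G \<inter> space M) = (\<integral>\<^sup>+ x. indicator G x \<partial>PiM I N)"
    using Xv_meas G_sets sets_N by (simp add: emeasure_distr[symmetric] distr_Xv)
  also have "\<dots> = (\<integral>\<^sup>+ x. (\<integral>\<^sup>+ y. indicator G (x(p := y)) \<partial>N p) \<partial>PiM (I - {p}) N)"
  proof -
    have "G \<in> sets (PiM (insert p (I - {p})) N)"
      using G_sets sets_N I_eq by simp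
    then show ?thesis
      using fin by (subst I_eq, intro product_nn_integral_insert) auto
  qed
  also have "\<dots> \<le> (\<integral>\<^sup>+ x. ennreal (2 * L * c) \<partial>PiM (I - {p}) N)"
  proof (rule nn_integral_mono)
    fix x
    define S where "S = {y::real. \<bar>ln y - F x\<bar> \<le> L}"
    have S_sets: "S \<in> sets borel"
      unfolding S_def by measurable
    have "(\<integral>\<^sup>+ y. indicator G (x(p := y)) \<partial>N p) \<le> (\<integral>\<^sup>+ y. indicator S y \<partial>N p)"
      by (intro nn_integral_mono) (auto simp: indicator_def G_def S_def F_indep)
    also have "\<dots> = emeasure M (X p -` S \<inter> space M)"
      unfolding N_def using p meas S_sets by (simp add: emeasure_distr)
    also have "\<dots> = (\<integral>\<^sup>+y. g y * indicator S y \<partial>lborel)"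
      using dist S_sets by (intro distributed_emeasure) auto
    also have "\<dots> \<le> ennreal (2 * L * c)"
      unfolding S_def using g_le g_support assms(9,10) by (rule nn_integral_density_ln_window_le)
    finally show "(\<integral>\<^sup>+ y. indicator G (x(p := y)) \<partial>N p) \<le> ennreal (2 * L * c)" .
  qed
  also have "\<dots> = ennreal (2 * L * c)"
  proof -
    interpret rest: prob_space "PiM (I - {p}) N"
      by (intro prob_space_PiM N_prob)
    show ?thesis by (simp add: rest.emeasure_space_1)
  qed
  finally show ?thesis
    unfolding event_eq measure_def using assms(9,10) by (simp add: enn2real_leI)
qed

lemma abs_ln_diff_ge_inverse:
  fixes k l N :: nat
  assumes "1 \<le> k" "1 \<le> l" "k \<le> N" "l \<le> N" "k \<noteq> l"
  shows "1 / real N \<le> \<bar>ln (real k) - ln (real l)\<bar>"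
proof -
  have gap: "1 / real N \<le> ln (real a) - ln (real b)" if "1 \<le> b" "b < a" "a \<le> N" for a b :: nat
  proof -
    have "1 / real N \<le> 1 / real a"
      using that by (intro divide_left_mono) auto
    also have "\<dots> \<le> (real a - real b) / real a"
      using that by (intro divide_right_mono) auto
    also have "\<dots> = 1 - real b / real a"
      using that by (simp add: field_simps)
    also have "\<dots> \<le> - ln (real b / real a)"
      using ln_le_minus_one[of "real b / real a"] that by simp
    also have "\<dots> = ln (real a) - ln (real b)"
      using that by (simp add: ln_div)
    finally show ?thesis .
  qed
  show ?thesis
    using assms gap[of l k] gap[of k l] by (cases "k < l") auto
qed

lemma abs_ln_diff_le_ln:
  fixes k l n :: nat
  assumes "k \<in> {2..n}" "l \<in> {2..n}"
  shows "\<bar>ln (real k) - ln (real l)\<bar> \<le> ln (real n)"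
proof -
  have "0 \<le> ln (real k)" "ln (real k) \<le> ln (real n)" "0 \<le> ln (real l)" "ln (real l) \<le> ln (real n)"
    using assms by auto
  then show ?thesis by linarith
qed

lemma abs_le_of_close_quotients:
  fixes a c d q K e :: real
  assumes "c \<noteq> 0" "d \<noteq> 0" "\<bar>a / c - a / d\<bar> \<le> q" "\<bar>c\<bar> \<le> K" "\<bar>d\<bar> \<le> K"
    and "0 < e" "e \<le> \<bar>d - c\<bar>"
  shows "\<bar>a\<bar> \<le> q * K\<^sup>2 / e"
proof -
  have "a / c - a / d = a * (d - c) / (c * d)"
    using assms by (simp add: field_simps)
  with assms have "\<bar>a\<bar> * \<bar>d - c\<bar> \<le> q * (\<bar>c\<bar> * \<bar>d\<bar>)"
    by (simp add: abs_mult pos_divide_le_eq)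
  moreover have "\<bar>c\<bar> * \<bar>d\<bar> \<le> K * K"
    using assms by (intro mult_mono) auto
  then have "q * (\<bar>c\<bar> * \<bar>d\<bar>) \<le> q * K\<^sup>2"
    using assms(3) by (intro mult_left_mono) (auto simp: power2_eq_square)
  moreover have "\<bar>a\<bar> * e \<le> \<bar>a\<bar> * \<bar>d - c\<bar>"
    using assms by (intro mult_left_mono) auto
  ultimately show ?thesis
    using assms by (simp add: pos_le_divide_eq)
qed

lemma rho_swap: "rho w v2 v1 k2 k1 = rho w v1 v2 k1 k2"
  unfolding rho_def by (metis minus_diff_eq minus_divide_divide)

lemma rho_same_vertices_close:
  fixes n k1 k2 k3 k4 :: nat
  assumes k: "k1 \<in> {2..n}" "k2 \<in> {2..n}" "k3 \<in> {2..n}" "k4 \<in> {2..n}" "k1 \<noteq> k2" "k3 \<noteq> k4"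
    and ne: "rho w v1 v2 k1 k2 \<noteq> rho w v1 v2 k3 k4"
    and close: "\<bar>rho w v1 v2 k1 k2 - rho w v1 v2 k3 k4\<bar> \<le> q"
  shows "\<bar>ln (w v1) - ln (w v2)\<bar> \<le> q * (ln (real n))\<^sup>2 * (real n)\<^sup>2"
proof -
  define a where "a = ln (w v1) - ln (w v2)"
  define c where "c = ln (real k1) - ln (real k2)"
  define d where "d = ln (real k3) - ln (real k4)"
  have c0: "c \<noteq> 0" and d0: "d \<noteq> 0"
    using k by (auto simp: c_def d_def)
  \<comment> \<open>the gap \<open>d - c\<close> is a difference of logarithms of integers in \<open>[1, n\<^sup>2]\<close>\<close>
  have dc: "d - c = ln (real (k3 * k2)) - ln (real (k4 * k1))"
    unfolding c_def d_def using k by (simp add: ln_mult)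
  have "k3 * k2 \<noteq> k4 * k1"
  proof
    assume "k3 * k2 = k4 * k1"
    with dc have "d = c" by simp
    with ne show False by (simp add: rho_def c_def d_def)
  qed
  then have "1 / real (n * n) \<le> \<bar>ln (real (k3 * k2)) - ln (real (k4 * k1))\<bar>"
    using k by (intro abs_ln_diff_ge_inverse) (auto intro: mult_le_mono simp: Suc_le_eq)
  then have "1 / real (n * n) \<le> \<bar>d - c\<bar>"
    by (simp only: dc)
  moreover have "0 < 1 / real (n * n)"
    using k by simp
  moreover have "\<bar>a / c - a / d\<bar> \<le> q"
    using close by (simp add: rho_def a_def c_def d_def)
  moreover have "\<bar>c\<bar> \<le> ln (real n)" "\<bar>d\<bar> \<le> ln (real n)"
    using k by (simp_all add: c_def d_def abs_ln_diff_le_ln)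
  ultimately have "\<bar>a\<bar> \<le> q * (ln (real n))\<^sup>2 / (1 / real (n * n))"
    using abs_le_of_close_quotients[OF c0 d0] by blast
  then show ?thesis
    by (simp add: a_def power2_eq_square)
qed

lemma ln_window_of_rho_close:
  fixes n k3 k4 :: nat
  assumes k: "k3 \<in> {2..n}" "k4 \<in> {2..n}" "k3 \<noteq> k4"
    and close: "\<bar>r - rho w v3 v4 k3 k4\<bar> \<le> q"
  shows "\<bar>ln (w v3) - ln (w v4) - (ln (real k3) - ln (real k4)) * r\<bar> \<le> q * ln (real n)"
proof -
  define d where "d = ln (real k3) - ln (real k4)"
  have "d \<noteq> 0"
    using k by (simp add: d_def)
  then have "ln (w v3) - ln (w v4) - d * r = d * (rho w v3 v4 k3 k4 - r)"
    by (simp add: rho_def d_def field_simps)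
  also have "\<bar>\<dots>\<bar> \<le> ln (real n) * q"
    unfolding abs_mult using close k abs_ln_diff_le_ln[of k3 n k4]
    by (intro mult_mono) (auto simp: d_def abs_minus_commute)
  finally show ?thesis
    by (simp add: d_def mult.commute)
qed

type_synonym tau_label = "nat \<times> nat \<times> nat \<times> nat"

definition tau_index :: "nat \<Rightarrow> tau_label set" where
  "tau_index n = {(v1, v2, k1, k2). v1 \<in> {1..n} \<and> v2 \<in> {1..n} \<and> v1 \<noteq> v2 \<and>
      k1 \<in> {2..n} \<and> k2 \<in> {2..n} \<and> k1 \<noteq> k2}"

definition rho_at :: "(nat \<Rightarrow> real) \<Rightarrow> tau_label \<Rightarrow> real" where
  "rho_at w = (\<lambda>(v1, v2, k1, k2). rho w v1 v2 k1 k2)"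

lemma tau_eq_image: "tau n w = rho_at w ` tau_index n"
  unfolding tau_def tau_index_def rho_at_def by (auto simp: image_iff) blast

lemma tau_index_subset: "tau_index n \<subseteq> {1..n} \<times> {1..n} \<times> {2..n} \<times> {2..n}"
  unfolding tau_index_def by auto

lemma finite_tau_index: "finite (tau_index n)"
  using tau_index_subset by (rule finite_subset) simp

lemma card_tau_index_le: "card (tau_index n) \<le> n ^ 4"
proof -
  have "card (tau_index n) \<le> card ({1..n} \<times> {1..n} \<times> {2..n} \<times> {2..n})"
    using tau_index_subset by (intro card_mono) auto
  also have "\<dots> \<le> n * n * n * n"
    by (simp add: card_cartesian_product mult_le_mono)
  finally show ?thesis
    by (simp add: power_def)
qed

lemma separated_UN_image_iff:
  "(\<forall>a\<in>(\<Union>i\<in>A. g i ` S). \<forall>b\<in>(\<Union>i\<in>A. g i ` S). a \<noteq> b \<longrightarrow> q < \<bar>a - b\<bar>) \<longleftrightarrow>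
    (\<forall>i\<in>A. \<forall>j\<in>A. \<forall>s\<in>S. \<forall>t\<in>S. g i s \<noteq> g j t \<longrightarrow> q < \<bar>g i s - g j t\<bar>)"
  by blast

lemma (in finite_measure) measure_UN_le_card_mult:
  assumes "finite A" "\<And>a. a \<in> A \<Longrightarrow> E a \<in> sets M" "\<And>a. a \<in> A \<Longrightarrow> measure M (E a) \<le> b"
  shows "measure M (\<Union>a\<in>A. E a) \<le> real (card A) * b"
proof -
  have "measure M (\<Union>a\<in>A. E a) \<le> (\<Sum>a\<in>A. measure M (E a))"
    using assms by (intro measure_UNION_le) auto
  also have "\<dots> \<le> real (card A) * b"
    using assms(3) by (rule sum_bounded_above)
  finally show ?thesis .
qed

lemma collision_bound_arith:
  fixes q \<sigma> :: real and m n C T :: nat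
  assumes C: "C \<le> m ^ 2 * n ^ 8" and T: "T \<le> m * n ^ 2" and "0 \<le> q" "0 < \<sigma>"
  shows "real C * (2 * (q * ln (real n)) / \<sigma>) + real T * (2 * (q * (ln (real n))\<^sup>2 * (real n)\<^sup>2) / \<sigma>)
    \<le> 4 * q * (1 / \<sigma>) * real m ^ 2 * real n ^ 8 * ln (real n)"
proof -
  define K where "K = ln (real n)"
  define Q where "Q = 2 * q / \<sigma>"
  have "0 \<le> K"
    unfolding K_def by (cases "n = 0") auto
  have "0 \<le> Q"
    using assms by (simp add: Q_def)
  have main: "real m * real n ^ 4 * K * K \<le> real m ^ 2 * real n ^ 8 * K"
  proof (cases "m = 0 \<or> n = 0")
    case False
    have "K \<le> real n"
      using False by (simp add: K_def less_imp_le ln_less_self)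
    also have "\<dots> \<le> real n ^ 4"
      using False by (simp add: self_le_power)
    also have "\<dots> \<le> real m * real n ^ 4"
      using False by simp
    finally have "real m * real n ^ 4 * K * K \<le> real m * real n ^ 4 * K * (real m * real n ^ 4)"
      using \<open>0 \<le> K\<close> by (intro mult_left_mono) auto
    then show ?thesis
      by (simp add: power2_eq_square algebra_simps flip: power_add)
  qed (auto simp: K_def)
  have C_term: "real C * (Q * K) \<le> real m ^ 2 * real n ^ 8 * (Q * K)"
    using C \<open>0 \<le> K\<close> \<open>0 \<le> Q\<close> by (intro mult_right_mono) (simp_all flip: of_nat_power of_nat_mult)
  have "real T * (Q * K\<^sup>2 * (real n)\<^sup>2) \<le> real m * real n ^ 2 * (Q * K\<^sup>2 * (real n)\<^sup>2)"
    using T \<open>0 \<le> Q\<close> by (intro mult_right_mono) (simp_all flip: of_nat_power of_nat_mult)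
  also have "\<dots> = Q * (real m * real n ^ 4 * K * K)"
    by (simp add: power2_eq_square power4_eq_xxxx algebra_simps)
  also have "\<dots> \<le> Q * (real m ^ 2 * real n ^ 8 * K)"
    using main \<open>0 \<le> Q\<close> by (rule mult_left_mono)
  finally have T_term: "real T * (Q * K\<^sup>2 * (real n)\<^sup>2) \<le> Q * (real m ^ 2 * real n ^ 8 * K)" .
  have "real C * (2 * (q * K) / \<sigma>) + real T * (2 * (q * K\<^sup>2 * (real n)\<^sup>2) / \<sigma>)
      = real C * (Q * K) + real T * (Q * K\<^sup>2 * (real n)\<^sup>2)"
    by (simp add: Q_def)
  also have "\<dots> \<le> real m ^ 2 * real n ^ 8 * (Q * K) + Q * (real m ^ 2 * real n ^ 8 * K)"
    using C_term T_term by (rule add_mono)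
  also have "\<dots> = 4 * q * (1 / \<sigma>) * real m ^ 2 * real n ^ 8 * K"
    by (simp add: Q_def field_simps)
  finally show ?thesis
    by (simp only: K_def)
qed

type_synonym collision_label = "nat \<times> nat \<times> tau_label \<times> tau_label"

locale smooth_instances = prob_space M for M :: "'a measure" +
  fixes W :: "nat \<Rightarrow> nat \<Rightarrow> 'a \<Rightarrow> real" and f :: "nat \<Rightarrow> nat \<Rightarrow> real \<Rightarrow> ennreal"
    and \<sigma> :: real and m n :: nat
  assumes sigma_pos: "0 < \<sigma>"
    and indep_weights: "indep_vars (\<lambda>_. borel) (\<lambda>p. W (fst p) (snd p)) ({1..m} \<times> {1..n})"
    and weight_distributed: "\<forall>i\<in>{1..m}. \<forall>v\<in>{1..n}. distributed M lborel (W i v) (f i v)"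
    and density_le: "\<forall>i\<in>{1..m}. \<forall>v\<in>{1..n}. \<forall>x. f i v x \<le> ennreal (1 / \<sigma>)"
    and density_support: "\<forall>i\<in>{1..m}. \<forall>v\<in>{1..n}. \<forall>x. x \<notin> {0..1} \<longrightarrow> f i v x = 0"
begin

definition weights :: "'a \<Rightarrow> nat \<times> nat \<Rightarrow> real" where
  "weights \<omega> = (\<lambda>p\<in>{1..m} \<times> {1..n}. W (fst p) (snd p) \<omega>)"

lemma W_measurable: "i \<in> {1..m} \<Longrightarrow> v \<in> {1..n} \<Longrightarrow> W i v \<in> borel_measurable M"
  using weight_distributed by (auto simp: distributed_def)

lemma measure_ln_pivot_le:
  assumes p: "(i, v) \<in> {1..m} \<times> {1..n}" and p': "(i', v') \<in> {1..m} \<times> {1..n}"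
    and F_meas: "F \<in> borel_measurable (PiM ({1..m} \<times> {1..n}) (\<lambda>_. borel))"
    and F_indep: "\<forall>x y. F (x((i, v) := y)) = F x" and "(i, v) \<noteq> (i', v')" "0 \<le> L"
  shows "measure M {\<omega>\<in>space M. \<bar>ln (W i v \<omega>) - ln (W i' v' \<omega>) - F (weights \<omega>)\<bar> \<le> L} \<le> 2 * L / \<sigma>"
proof -
  define G where "G = (\<lambda>x. ln (x (i', v')) + F x)"
  have "measure M {\<omega>\<in>space M. \<bar>ln (W i v \<omega>) - G (weights \<omega>)\<bar> \<le> L} \<le> 2 * L * (1 / \<sigma>)"
    unfolding weights_def
  proof (rule measure_ln_window_indep_le[where X = "\<lambda>p. W (fst p) (snd p)" and p = "(i, v)" and g = "f i v",
        simplified, OF _ p indep_weights])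
    show "G \<in> borel_measurable (PiM ({1..m} \<times> {1..n}) (\<lambda>_. borel))"
      unfolding G_def using p' F_meas by measurable
    show "\<forall>x y. G (x((i, v) := y)) = G x"
    proof (intro allI)
      fix x :: "nat \<times> nat \<Rightarrow> real" and y :: real
      have "(x((i, v) := y)) (i', v') = x (i', v')"
        using \<open>(i, v) \<noteq> (i', v')\<close> by auto
      then show "G (x((i, v) := y)) = G x"
        using F_indep by (simp add: G_def del: fun_upd_apply)
    qed
  qed (use p weight_distributed density_le density_support sigma_pos \<open>0 \<le> L\<close> in auto)
  moreover have "weights \<omega> (i', v') = W i' v' \<omega>" for \<omega>
    using p' by (simp add: weights_def)
  ultimately show ?thesis
    by (simp add: G_def algebra_simps)
qed

lemma measure_ln_window_le:
  assumes p: "(i, v) \<in> {1..m} \<times> {1..n}" and p': "(i', v') \<in> {1..m} \<times> {1..n}"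
    and F_meas: "F \<in> borel_measurable (PiM ({1..m} \<times> {1..n}) (\<lambda>_. borel))"
    and F_indep: "(\<forall>x y. F (x((i, v) := y)) = F x) \<or> (\<forall>x y. F (x((i', v') := y)) = F x)"
    and "(i, v) \<noteq> (i', v')" "0 \<le> L"
  shows "measure M {\<omega>\<in>space M. \<bar>ln (W i v \<omega>) - ln (W i' v' \<omega>) - F (weights \<omega>)\<bar> \<le> L} \<le> 2 * L / \<sigma>"
  using F_indep
proof
  assume "\<forall>x y. F (x((i, v) := y)) = F x"
  then show ?thesis
    using measure_ln_pivot_le[OF p p' F_meas] assms(5,6) by blast
next
  assume F_indep': "\<forall>x y. F (x((i', v') := y)) = F x"
  have "(\<lambda>x. - F x) \<in> borel_measurable (PiM ({1..m} \<times> {1..n}) (\<lambda>_. borel))"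
    using F_meas by measurable
  moreover have "\<forall>x y. - F (x((i', v') := y)) = - F x"
    using F_indep' by (simp del: fun_upd_apply)
  moreover have "(i', v') \<noteq> (i, v)"
    using assms(5) by auto
  ultimately have "measure M {\<omega>\<in>space M. \<bar>ln (W i' v' \<omega>) - ln (W i v \<omega>) - (- F (weights \<omega>))\<bar> \<le> L}
      \<le> 2 * L / \<sigma>"
    using measure_ln_pivot_le[OF p' p, of "\<lambda>x. - F x" L] assms(6) by blast
  then show ?thesis
    by (simp add: abs_minus_commute algebra_simps)
qed

definition collision_index :: "collision_label set" where
  "collision_index = {1..m} \<times> {1..m} \<times> tau_index n \<times> tau_index n"

definition near_collision :: "real \<Rightarrow> collision_label \<Rightarrow> 'a set" where
  "near_collision q = (\<lambda>(i, j, s, t). {\<omega>\<in>space M.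
      rho_at (\<lambda>v. W i v \<omega>) s \<noteq> rho_at (\<lambda>v. W j v \<omega>) t \<and>
      \<bar>rho_at (\<lambda>v. W i v \<omega>) s - rho_at (\<lambda>v. W j v \<omega>) t\<bar> \<le> q})"

definition shares_vertex_pair :: "collision_label \<Rightarrow> bool" where
  "shares_vertex_pair = (\<lambda>(i, j, (v1, v2, k1, k2), (v3, v4, k3, k4)). j = i \<and> {v3, v4} = {v1, v2})"

definition ln_window_event :: "real \<Rightarrow> collision_label \<Rightarrow> 'a set" where
  "ln_window_event q = (\<lambda>(i, j, (v1, v2, k1, k2), (v3, v4, k3, k4)). {\<omega>\<in>space M.
      \<bar>ln (W j v3 \<omega>) - ln (W j v4 \<omega>) - (ln (real k3) - ln (real k4)) * rho (\<lambda>v. W i v \<omega>) v1 v2 k1 k2\<bar>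
        \<le> q * ln (real n)})"

definition vertex_pairs :: "(nat \<times> nat \<times> nat) set" where
  "vertex_pairs = {(i, v1, v2). i \<in> {1..m} \<and> v1 \<in> {1..n} \<and> v2 \<in> {1..n} \<and> v1 \<noteq> v2}"

definition ln_gap_event :: "real \<Rightarrow> nat \<times> nat \<times> nat \<Rightarrow> 'a set" where
  "ln_gap_event L = (\<lambda>(i, v1, v2). {\<omega>\<in>space M. \<bar>ln (W i v1 \<omega>) - ln (W i v2 \<omega>)\<bar> \<le> L})"

lemma finite_collision_index: "finite collision_index"
  by (simp add: collision_index_def finite_tau_index)

lemma card_collision_index_le: "card collision_index \<le> m ^ 2 * n ^ 8"
proof -
  have "card collision_index = m * m * (card (tau_index n) * card (tau_index n))"
    by (simp add: collision_index_def card_cartesian_product)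
  also have "\<dots> \<le> m * m * (n ^ 4 * n ^ 4)"
    using card_tau_index_le by (intro mult_le_mono) auto
  finally show ?thesis
    by (simp add: power2_eq_square flip: power_add)
qed

lemma finite_vertex_pairs: "finite vertex_pairs"
  by (rule finite_subset[of _ "{1..m} \<times> {1..n} \<times> {1..n}"]) (auto simp: vertex_pairs_def)

lemma card_vertex_pairs_le: "card vertex_pairs \<le> m * n ^ 2"
proof -
  have "card vertex_pairs \<le> card ({1..m} \<times> {1..n} \<times> {1..n})"
    by (intro card_mono) (auto simp: vertex_pairs_def)
  then show ?thesis
    by (simp add: card_cartesian_product power2_eq_square)
qed

lemma separated_event_eq:
  "{\<omega>\<in>space M. \<forall>a\<in>(\<Union>i\<in>{1..m}. tau n (\<lambda>v. W i v \<omega>)). \<forall>b\<in>(\<Union>i\<in>{1..m}. tau n (\<lambda>v. W i v \<omega>)).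
      a \<noteq> b \<longrightarrow> q < \<bar>a - b\<bar>}
    = space M - (\<Union>c\<in>collision_index. near_collision q c)"
  unfolding tau_eq_image separated_UN_image_iff collision_index_def
  by (auto simp: near_collision_def not_less) fastforce+

lemma sets_near_collision:
  assumes "c \<in> collision_index"
  shows "near_collision q c \<in> sets M"
proof -
  obtain i j v1 v2 k1 k2 v3 v4 k3 k4 where c: "c = (i, j, (v1, v2, k1, k2), (v3, v4, k3, k4))"
    by (metis prod.collapse)
  with assms have [measurable]: "W i v1 \<in> borel_measurable M" "W i v2 \<in> borel_measurable M"
    "W j v3 \<in> borel_measurable M" "W j v4 \<in> borel_measurable M"
    by (auto simp: collision_index_def tau_index_def intro!: W_measurable)
  show ?thesis
    unfolding c near_collision_def rho_at_def rho_def by simp measurable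
qed

lemma near_collision_subset:
  "(\<Union>c\<in>collision_index. near_collision q c)
    \<subseteq> (\<Union>c\<in>{c\<in>collision_index. \<not> shares_vertex_pair c}. ln_window_event q c)
      \<union> (\<Union>t\<in>vertex_pairs. ln_gap_event (q * (ln (real n))\<^sup>2 * (real n)\<^sup>2) t)"
proof (intro subsetI)
  fix \<omega> assume "\<omega> \<in> (\<Union>c\<in>collision_index. near_collision q c)"
  then obtain i j v1 v2 k1 k2 v3 v4 k3 k4
    where c: "(i, j, (v1, v2, k1, k2), (v3, v4, k3, k4)) \<in> collision_index"
      and \<omega>: "\<omega> \<in> near_collision q (i, j, (v1, v2, k1, k2), (v3, v4, k3, k4))"
    by (metis (no_types, opaque_lifting) UN_E prod.collapse)
  define r where "r = rho (\<lambda>v. W i v \<omega>) v1 v2 k1 k2"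
  define r' where "r' = rho (\<lambda>v. W j v \<omega>) v3 v4 k3 k4"
  have idx: "i \<in> {1..m}" "(v1, v2, k1, k2) \<in> tau_index n" "(v3, v4, k3, k4) \<in> tau_index n"
    using c by (auto simp: collision_index_def)
  have close: "\<omega> \<in> space M" "r \<noteq> r'" "\<bar>r - r'\<bar> \<le> q"
    using \<omega> by (auto simp: near_collision_def rho_at_def r_def r'_def)
  show "\<omega> \<in> (\<Union>c\<in>{c\<in>collision_index. \<not> shares_vertex_pair c}. ln_window_event q c)
      \<union> (\<Union>t\<in>vertex_pairs. ln_gap_event (q * (ln (real n))\<^sup>2 * (real n)\<^sup>2) t)"
  proof (cases "j = i \<and> {v3, v4} = {v1, v2}")
    case True
    have "\<bar>ln (W i v1 \<omega>) - ln (W i v2 \<omega>)\<bar> \<le> q * (ln (real n))\<^sup>2 * (real n)\<^sup>2"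
    proof (cases "v3 = v1")
      case True
      with \<open>j = i \<and> _\<close> idx have "v4 = v2"
        by (auto simp: tau_index_def doubleton_eq_iff)
      with True \<open>j = i \<and> _\<close> idx close show ?thesis
        by (intro rho_same_vertices_close[of k1 n k2 k3 k4]) (auto simp: tau_index_def r_def r'_def)
    next
      case False
      with \<open>j = i \<and> _\<close> have "v3 = v2" "v4 = v1"
        by (auto simp: doubleton_eq_iff)
      with \<open>j = i \<and> _\<close> idx close show ?thesis
        by (intro rho_same_vertices_close[of k1 n k2 k4 k3])
          (auto simp: tau_index_def r_def r'_def rho_swap[of _ v2 v1])
    qed
    moreover have "(i, v1, v2) \<in> vertex_pairs"
      using idx by (auto simp: vertex_pairs_def tau_index_def)
    ultimately show ?thesis
      using close by (auto simp: ln_gap_event_def)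
  next
    case False
    have "\<bar>ln (W j v3 \<omega>) - ln (W j v4 \<omega>) - (ln (real k3) - ln (real k4)) * r\<bar> \<le> q * ln (real n)"
      using idx close by (intro ln_window_of_rho_close) (auto simp: tau_index_def r'_def)
    then have "\<omega> \<in> ln_window_event q (i, j, (v1, v2, k1, k2), (v3, v4, k3, k4))"
      using close by (simp add: ln_window_event_def r_def)
    moreover have "\<not> shares_vertex_pair (i, j, (v1, v2, k1, k2), (v3, v4, k3, k4))"
      using False by (simp add: shares_vertex_pair_def)
    ultimately show ?thesis
      using c by blast
  qed
qed

lemma sets_ln_window_event:
  assumes "c \<in> collision_index"
  shows "ln_window_event q c \<in> sets M"
proof -
  obtain i j v1 v2 k1 k2 v3 v4 k3 k4 where c: "c = (i, j, (v1, v2, k1, k2), (v3, v4, k3, k4))"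
    by (metis prod.collapse)
  with assms have [measurable]: "W i v1 \<in> borel_measurable M" "W i v2 \<in> borel_measurable M"
    "W j v3 \<in> borel_measurable M" "W j v4 \<in> borel_measurable M"
    by (auto simp: collision_index_def tau_index_def intro!: W_measurable)
  show ?thesis
    unfolding c ln_window_event_def rho_def by simp measurable
qed

lemma measure_ln_window_event_le:
  assumes "c \<in> collision_index" "\<not> shares_vertex_pair c" "0 \<le> q"
  shows "measure M (ln_window_event q c) \<le> 2 * (q * ln (real n)) / \<sigma>"
proof -
  obtain i j v1 v2 k1 k2 v3 v4 k3 k4 where c: "c = (i, j, (v1, v2, k1, k2), (v3, v4, k3, k4))"
    by (metis prod.collapse)
  have idx: "(i, v1) \<in> {1..m} \<times> {1..n}" "(i, v2) \<in> {1..m} \<times> {1..n}"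
    "(j, v3) \<in> {1..m} \<times> {1..n}" "(j, v4) \<in> {1..m} \<times> {1..n}" "v3 \<noteq> v4"
    using assms(1) by (auto simp: c collision_index_def tau_index_def)
  define F where "F x = (ln (real k3) - ln (real k4)) * rho (\<lambda>v. x (i, v)) v1 v2 k1 k2" for x
  have F_meas: "F \<in> borel_measurable (PiM ({1..m} \<times> {1..n}) (\<lambda>_. borel))"
    unfolding F_def rho_def using idx by measurable
  have F_indep: "(\<forall>x y. F (x((j, v3) := y)) = F x) \<or> (\<forall>x y. F (x((j, v4) := y)) = F x)"
    using assms(2) idx by (auto simp: c shares_vertex_pair_def F_def rho_def doubleton_eq_iff)
  have "0 \<le> q * ln (real n)"
    using assms(3) by (cases "n = 0") auto
  with idx have "measure M {\<omega>\<in>space M. \<bar>ln (W j v3 \<omega>) - ln (W j v4 \<omega>) - F (weights \<omega>)\<bar>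
      \<le> q * ln (real n)} \<le> 2 * (q * ln (real n)) / \<sigma>"
    by (intro measure_ln_window_le[OF _ _ F_meas F_indep]) auto
  moreover have "F (weights \<omega>) = (ln (real k3) - ln (real k4)) * rho (\<lambda>v. W i v \<omega>) v1 v2 k1 k2" for \<omega>
    using idx by (simp add: F_def weights_def rho_def)
  ultimately show ?thesis
    by (simp add: c ln_window_event_def)
qed

lemma sets_ln_gap_event:
  assumes "t \<in> vertex_pairs"
  shows "ln_gap_event L t \<in> sets M"
proof -
  obtain i v1 v2 where t: "t = (i, v1, v2)"
    by (metis prod.collapse)
  with assms have [measurable]: "W i v1 \<in> borel_measurable M" "W i v2 \<in> borel_measurable M"
    by (auto simp: vertex_pairs_def intro!: W_measurable)
  show ?thesis
    unfolding t ln_gap_event_def by simp measurable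
qed

lemma measure_ln_gap_event_le:
  assumes "t \<in> vertex_pairs" "0 \<le> L"
  shows "measure M (ln_gap_event L t) \<le> 2 * L / \<sigma>"
proof -
  obtain i v1 v2 where t: "t = (i, v1, v2)"
    by (metis prod.collapse)
  have "measure M {\<omega>\<in>space M. \<bar>ln (W i v1 \<omega>) - ln (W i v2 \<omega>) - 0\<bar> \<le> L} \<le> 2 * L / \<sigma>"
    using assms by (intro measure_ln_window_le) (auto simp: t vertex_pairs_def)
  then show ?thesis
    by (simp add: t ln_gap_event_def)
qed

theorem prob_tau_separated_ge:
  assumes "0 \<le> q"
  shows "measure M {\<omega>\<in>space M.
      \<forall>a\<in>(\<Union>i\<in>{1..m}. tau n (\<lambda>v. W i v \<omega>)). \<forall>b\<in>(\<Union>i\<in>{1..m}. tau n (\<lambda>v. W i v \<omega>)).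
        a \<noteq> b \<longrightarrow> q < \<bar>a - b\<bar>}
    \<ge> 1 - 4 * q * (1 / \<sigma>) * real m ^ 2 * real n ^ 8 * ln (real n)"
proof -
  define L where "L = q * (ln (real n))\<^sup>2 * (real n)\<^sup>2"
  define C where "C = {c\<in>collision_index. \<not> shares_vertex_pair c}"
  have "C \<subseteq> collision_index"
    by (auto simp: C_def)
  then have "finite C" "card C \<le> m ^ 2 * n ^ 8"
    using finite_collision_index card_collision_index_le by (auto intro: finite_subset card_mono le_trans)
  have "measure M (\<Union>c\<in>collision_index. near_collision q c)
      \<le> measure M ((\<Union>c\<in>C. ln_window_event q c) \<union> (\<Union>t\<in>vertex_pairs. ln_gap_event L t))"
    using near_collision_subset[of q] \<open>C \<subseteq> _\<close> finite_vertex_pairs \<open>finite C\<close>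
    by (intro finite_measure_mono) (auto simp: C_def L_def intro!: sets_ln_window_event sets_ln_gap_event)
  also have "\<dots> \<le> measure M (\<Union>c\<in>C. ln_window_event q c) + measure M (\<Union>t\<in>vertex_pairs. ln_gap_event L t)"
    using \<open>C \<subseteq> _\<close> \<open>finite C\<close> finite_vertex_pairs
    by (intro measure_Un_le) (auto intro!: sets_ln_window_event sets_ln_gap_event)
  also have "\<dots> \<le> real (card C) * (2 * (q * ln (real n)) / \<sigma>) + real (card vertex_pairs) * (2 * L / \<sigma>)"
    using \<open>C \<subseteq> _\<close> \<open>finite C\<close> finite_vertex_pairs assms
    by (intro add_mono measure_UN_le_card_mult)
      (auto simp: C_def L_def intro!: sets_ln_window_event sets_ln_gap_event
        measure_ln_window_event_le measure_ln_gap_event_le)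
  also have "\<dots> \<le> 4 * q * (1 / \<sigma>) * real m ^ 2 * real n ^ 8 * ln (real n)"
    unfolding L_def using \<open>card C \<le> _\<close> card_vertex_pairs_le assms sigma_pos
    by (rule collision_bound_arith)
  finally have bound: "measure M (\<Union>c\<in>collision_index. near_collision q c)
      \<le> 4 * q * (1 / \<sigma>) * real m ^ 2 * real n ^ 8 * ln (real n)" .
  have "(\<Union>c\<in>collision_index. near_collision q c) \<in> sets M"
    using finite_collision_index sets_near_collision by (intro sets.finite_UN) auto
  with bound show ?thesis
    by (subst separated_event_eq) (simp add: prob_compl)
qed

end

theorem mainTheorem15:
  fixes M :: "'a measure" and W :: "nat \<Rightarrow> nat \<Rightarrow> 'a \<Rightarrow> real"
    and f :: "nat \<Rightarrow> nat \<Rightarrow> real \<Rightarrow> ennreal"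
    and \<sigma> q :: real and m n :: nat
  assumes "prob_space M"
    and "0 < \<sigma>" and "\<sigma> < 1" and "0 < q"
    and "prob_space.indep_vars M (\<lambda>_. borel) (\<lambda>p. W (fst p) (snd p)) ({1..m} \<times> {1..n})"
    and "\<forall>i\<in>{1..m}. \<forall>v\<in>{1..n}. distributed M lborel (W i v) (f i v)"
    and "\<forall>i\<in>{1..m}. \<forall>v\<in>{1..n}. \<forall>x. f i v x \<le> ennreal (1 / \<sigma>)"
    and "\<forall>i\<in>{1..m}. \<forall>v\<in>{1..n}. \<forall>x. x \<notin> {0..1} \<longrightarrow> f i v x = 0"
  shows "measure M {\<omega> \<in> space M.
            \<forall>a \<in> (\<Union>i\<in>{1..m}. tau n (\<lambda>v. W i v \<omega>)).
            \<forall>b \<in> (\<Union>i\<in>{1..m}. tau n (\<lambda>v. W i v \<omega>)).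
              a \<noteq> b \<longrightarrow> q < \<bar>a - b\<bar>}
         \<ge> 1 - 4 * q * (1 / \<sigma>) * real m ^ 2 * real n ^ 8 * ln (real n)"
proof -
  interpret smooth_instances M W f \<sigma> m n
    using assms by (simp add: smooth_instances_def smooth_instances_axioms_def)
  show ?thesis
    using prob_tau_separated_ge[of q] \<open>0 < q\<close> by simp
qed

end
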